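(* Let $R$ be a semiprime left Goldie ring. Then $\mathcal{C}_R\cap\mathrm{ass}_R(S)=\emptyset$ for every Ore set $S$ of $R$.
   Context: Rings are associative with $1$. $\mathcal{C}_R$ is the set of regular elements (non-zero-divisors on both sides) of $R$. A multiplicative set satisfies $SS\subseteq S$, $1\in S$, $0\notin S$; an Ore set additionally satisfies $Sr\cap Rs\ne\emptyset$ and $rS\cap sR\neq\emptyset$ for all $r\in R,s\in S$. $\mathrm{ass}_R(S)$ is the kernel of $R\to R\langle S^{-1}\rangle$, where $R\langle S^{-1}\rangle=R\langle X_S\rangle/I_S$, $R\langle X_S\rangle$ is freely generated by $R$ and noncommuting indeterminates $x_s$ ($s\in S$) and $I_S$ is generated by $sx_s-1,x_ss-1$. (For an Ore set, $\mathrm{ass}_R(S)=\{r: srt=0\text{ for some } s,t\in S\}$.) *)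

theory Defs
  imports Main
begin

definition regular_elems :: "'a::ring_1 set" where
  "regular_elems = {c. (\<forall>x. c * x = 0 \<longrightarrow> x = 0) \<and> (\<forall>x. x * c = 0 \<longrightarrow> x = 0)}"

definition multiplicative_set :: "'a::ring_1 set \<Rightarrow> bool" where
  "multiplicative_set S \<longleftrightarrow> (\<forall>s\<in>S. \<forall>t\<in>S. s * t \<in> S) \<and> 1 \<in> S \<and> 0 \<notin> S"

definition ore_set :: "'a::ring_1 set \<Rightarrow> bool" where
  "ore_set S \<longleftrightarrow> multiplicative_set S \<and>
     (\<forall>r. \<forall>s\<in>S. (\<exists>s'\<in>S. \<exists>r'. s' * r = r' * s) \<and> (\<exists>s'\<in>S. \<exists>r'. r * s' = s * r'))"

text \<open>For an Ore set S, the kernel of R \<rightarrow> R<S^-1> is {r. s r t = 0 for some s,t in S}.\<close>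
definition ass :: "'a::ring_1 set \<Rightarrow> 'a set" where
  "ass S = {r. \<exists>s\<in>S. \<exists>t\<in>S. s * r * t = 0}"

definition left_ideal :: "'a::ring_1 set \<Rightarrow> bool" where
  "left_ideal L \<longleftrightarrow> 0 \<in> L \<and> (\<forall>x\<in>L. \<forall>y\<in>L. x + y \<in> L) \<and> (\<forall>x\<in>L. - x \<in> L)
     \<and> (\<forall>r. \<forall>x\<in>L. r * x \<in> L)"

definition two_sided_ideal :: "'a::ring_1 set \<Rightarrow> bool" where
  "two_sided_ideal I \<longleftrightarrow> left_ideal I \<and> (\<forall>r. \<forall>x\<in>I. x * r \<in> I)"

definition semiprime :: "'a::ring_1 itself \<Rightarrow> bool" where
  "semiprime _ \<longleftrightarrow> (\<forall>I::'a set. two_sided_ideal I \<and> (\<forall>x\<in>I. \<forall>y\<in>I. x * y = 0) \<longrightarrow> I = {0})"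

definition left_ann :: "'a::ring_1 set \<Rightarrow> 'a set" where
  "left_ann X = {r. \<forall>x\<in>X. r * x = 0}"

definition acc_left_annihilators :: "'a::ring_1 itself \<Rightarrow> bool" where
  "acc_left_annihilators _ \<longleftrightarrow>
     \<not> (\<exists>f :: nat \<Rightarrow> 'a set. (\<forall>n. \<exists>X. f n = left_ann X) \<and> (\<forall>n. f n \<subset> f (Suc n)))"

text \<open>Finite left uniform dimension: no infinite direct sum of nonzero left ideals.\<close>
definition finite_left_uniform_dim :: "'a::ring_1 itself \<Rightarrow> bool" where
  "finite_left_uniform_dim _ \<longleftrightarrow>
     \<not> (\<exists>L :: nat \<Rightarrow> 'a set. (\<forall>n. left_ideal (L n) \<and> L n \<noteq> {0}) \<and>
          (\<forall>n (x :: nat \<Rightarrow> 'a). (\<forall>i<n. x i \<in> L i) \<and> (\<Sum>i<n. x i) = 0 \<longrightarrow> (\<forall>i<n. x i = 0)))"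

definition left_goldie :: "'a::ring_1 itself \<Rightarrow> bool" where
  "left_goldie T \<longleftrightarrow> acc_left_annihilators T \<and> finite_left_uniform_dim T"

end

theory Submission
  imports Defs
begin

text \<open>
  If \<open>s c t = 0\<close> with \<open>s, t \<in> S\<close>, then \<open>a = s c\<close> is killed on the right by \<open>t\<close>.
  The ascending chain condition on left annihilators makes the chain \<open>l.ann(t\<^sup>n)\<close> stationary,
  say at \<open>n\<close>; the left Ore condition gives \<open>s' a = r t\<^sup>n\<close> with \<open>s' \<in> S\<close>, and then
  \<open>r t\<^bsup>n+1\<^esup> = s' a t = 0\<close> forces \<open>r t\<^sup>n = 0\<close>, i.e. \<open>s' s c = 0\<close>. A regular \<open>c\<close> would give
  \<open>s' s = 0\<close>, contradicting \<open>0 \<notin> S\<close>.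
\<close>

lemma multiplicative_set_mult:
  "multiplicative_set S \<Longrightarrow> s \<in> S \<Longrightarrow> t \<in> S \<Longrightarrow> s * t \<in> S"
  unfolding multiplicative_set_def by blast

lemma multiplicative_set_zero_notin: "multiplicative_set S \<Longrightarrow> 0 \<notin> S"
  unfolding multiplicative_set_def by blast

lemma multiplicative_set_power:
  assumes "multiplicative_set S" and "t \<in> S"
  shows "t ^ n \<in> S"
proof (induction n)
  case 0
  then show ?case using assms(1) unfolding multiplicative_set_def by simp
next
  case (Suc n)
  then show ?case using assms multiplicative_set_mult by (simp add: power_Suc2)
qed

lemma left_ann_power_mono:
  fixes t :: "'a::ring_1"
  shows "left_ann {t ^ n} \<subseteq> left_ann {t ^ Suc n}"
  unfolding left_ann_def by (auto simp: power_Suc2 mult.assoc[symmetric] simp del: power_Suc)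

lemma acc_left_annihilators_stabilize:
  fixes f :: "nat \<Rightarrow> 'a::ring_1 set"
  assumes "acc_left_annihilators TYPE('a)"
    and "\<And>n. \<exists>X. f n = left_ann X"
    and "\<And>n. f n \<subseteq> f (Suc n)"
  obtains n where "f n = f (Suc n)"
proof -
  have "\<not> (\<forall>n. f n \<subset> f (Suc n))"
    using assms(1,2) unfolding acc_left_annihilators_def by blast
  then show thesis using assms(3) that by blast
qed

lemma left_ann_power_stabilize:
  fixes t :: "'a::ring_1"
  assumes "acc_left_annihilators TYPE('a)"
  obtains n where "\<And>r. r * t ^ Suc n = 0 \<Longrightarrow> r * t ^ n = 0"
proof -
  obtain n where "left_ann {t ^ n} = left_ann {t ^ Suc n}"
    using acc_left_annihilators_stabilize[OF assms, of "\<lambda>n. left_ann {t ^ n}"]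
      left_ann_power_mono by blast
  then show ?thesis using that unfolding left_ann_def by blast
qed

lemma ore_right_torsion_imp_left_torsion:
  fixes a :: "'a::ring_1"
  assumes acc: "acc_left_annihilators TYPE('a)"
    and ore: "ore_set S" and "t \<in> S" and at: "a * t = 0"
  obtains s' where "s' \<in> S" and "s' * a = 0"
proof -
  have mult: "multiplicative_set S" using ore unfolding ore_set_def by blast
  obtain n where stable: "\<And>r. r * t ^ Suc n = 0 \<Longrightarrow> r * t ^ n = 0"
    using left_ann_power_stabilize[OF acc] by blast
  obtain s' r where "s' \<in> S" and s'a: "s' * a = r * t ^ n"
    using ore multiplicative_set_power[OF mult \<open>t \<in> S\<close>, of n] unfolding ore_set_def by blast
  have "r * t ^ Suc n = s' * (a * t)"
    by (simp add: s'a power_Suc2 mult.assoc[symmetric] del: power_Suc)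
  then have "r * t ^ n = 0" using at stable by simp
  then show ?thesis using that \<open>s' \<in> S\<close> s'a by simp
qed

lemma regular_elems_disjoint_ass:
  fixes S :: "'a::ring_1 set"
  assumes acc: "acc_left_annihilators TYPE('a)" and ore: "ore_set S"
  shows "regular_elems \<inter> ass S = {}"
proof (rule ccontr)
  assume "regular_elems \<inter> ass S \<noteq> {}"
  then obtain c s t where c: "c \<in> regular_elems" and "s \<in> S" "t \<in> S" and "s * c * t = 0"
    unfolding ass_def by blast
  then obtain s' where "s' \<in> S" and "s' * (s * c) = 0"
    using ore_right_torsion_imp_left_torsion[OF acc ore] by blast
  then have "(s' * s) * c = 0" by (simp add: mult.assoc)
  then have "s' * s = 0" using c unfolding regular_elems_def by blast
  moreover have "multiplicative_set S" using ore unfolding ore_set_def by blast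
  then have "s' * s \<in> S" and "0 \<notin> S"
    using multiplicative_set_mult multiplicative_set_zero_notin \<open>s' \<in> S\<close> \<open>s \<in> S\<close> by blast+
  ultimately show False by simp
qed

theorem theorem5p2:
  assumes "semiprime TYPE('a::ring_1)"
    and "left_goldie TYPE('a)"
    and "ore_set (S :: 'a set)"
  shows "regular_elems \<inter> ass S = {}"
  using assms(2,3) regular_elems_disjoint_ass unfolding left_goldie_def by blast

end
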